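(* Let $m_c\in H$ be such that for every $\lambda\in\Lambda$ the local component has the form $m_\lambda=Y\,f_\lambda$ with $f_\lambda$ a power series in $s_\lambda$ (i.e. $G_0^\lambda=0$ for all $\lambda$). Write $f_\infty=\sum_{\ell\ge0}a_\ell s_\infty^\ell$ (with $a_0=0$). If $a_\ell=0$ for $\ell=0,1,\dots,2g+1$, then $m_c=0$.
   Context: Standing setup. Let $k$ be a finite field of odd characteristic $p$, $W(k)$ its ring of Witt vectors, $K$ the fraction field of $W(k)$, $|\cdot|$ the $p$-adic absolute value. Let $g\ge1$ and let $\lambda_1,\dots,\lambda_{2g+1}\in W(k)$ have pairwise distinct reductions modulo $p$. Put $Q(t)=\prod_{i=1}^{2g+1}(t-\lambda_i)$ and $h(t)=\frac{Q'(t)}{2Q(t)}$. Let $\Lambda=\{\lambda_1,\dots,\lambda_{2g+1},\infty\}$, $\Lambda_0=\Lambda\setminus\{\infty\}$. The local parameter at $\lambda\in\Lambda_0$ is $s_\lambda=t-\lambda$, and at $\infty$ it is $s_\infty=t^{-1}$. Let $B_K^\dagger$ be the ring of series $\sum_{\underline\ell\ge0}a_{\underline\ell}\,t^{\ell_0}\prod_{i}(t-\lambda_i)^{-\ell_i}$ ($a_{\underline\ell}\in K$) for which there is $\eta>1$ with $|a_{\underline\ell}|\eta^{\max_i\ell_i}\to0$; $\phi_\lambda(f)$ is the Laurent expansion of $f\in B_K^\dagger$ in $s_\lambda$. The principal part is $\Pr_\lambda(\sum a_\ell s_\lambda^\ell)=\sum_{\ell<0}a_\ell s_\lambda^\ell$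 for $\lambda\in\Lambda_0$ and $\Pr_\infty(\sum a_\ell s_\infty^\ell)=\sum_{\ell\le0}a_\ell s_\infty^\ell$; its expansion at another point $\mu$ is denoted $\phi_\mu(\cdot)$. For $\lambda\in\Lambda_0$, $\tilde R_{\lambda,c}$ is the space of $\sum_{\ell\ge0}a_\ell s_\lambda^\ell$ with $|a_\ell|\eta^\ell\to0$ for all $\eta<1$, and $R_{\infty,c}$ the analogous space of $\sum_{\ell\ge1}a_\ell s_\infty^\ell$. $B_c=\prod_{\lambda\in\Lambda_0}\tilde R_{\lambda,c}\times R_{\infty,c}$ is a $B_K^\dagger$-module via $(f\cdot G)^\mu=\phi_\mu(f)G^\mu-\sum_{\lambda\in\Lambda}\phi_\mu\big(\Pr_\lambda(\phi_\lambda(f)G^\lambda)\big)$. Let $A_K^\dagger=B_K^\dagger\oplus B_K^\dagger Y$ with $Y^2=Q(t)$, $\nabla_{GM}(1)=0$, $\nabla_{GM}(Y)=hY$; $M_c=A_K^\dagger\otimes_{B_K^\dagger}B_c$ with elements $m_c=1\otimes G_0+Y\otimes G_1$ ($G_0,G_1\in B_c$) and $\nabla_c(m_c)=1\otimes\partial_tG_0+Y\otimes(\partial_tG_1+h\cdot G_1)$, $\partial_t$ acting componentwise (as $-s_\infty^2\,d/ds_\infty$ on series in $s_\infty$). $H=\ker\nabla_c$ (the space $H^1_{MW,c}(V,\pi_*A_K^\dagger)$). Local components: $m_\lambda=G_0^\lambda+YG_1^\lambda$. *)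

theory Defs
  imports "HOL-Computational_Algebra.Computational_Algebra"
begin

text \<open>Points of Lambda: Some a is the finite point t = a, None is infinity.\<close>

text \<open>Abstract model of the p-adic absolute value on K (odd residue characteristic).\<close>
definition padic_abs :: "('a::field_char_0 \<Rightarrow> real) \<Rightarrow> bool" where
  "padic_abs absv \<longleftrightarrow>
     (\<forall>x. absv x \<ge> 0 \<and> (absv x = 0 \<longleftrightarrow> x = 0)) \<and>
     (\<forall>x y. absv (x * y) = absv x * absv y) \<and>
     (\<forall>x y. absv (x + y) \<le> max (absv x) (absv y)) \<and>
     (\<exists>p::nat. prime p \<and> odd p \<and> absv (of_nat p) < 1)"

definition Qpoly :: "nat \<Rightarrow> (nat \<Rightarrow> 'a::field) \<Rightarrow> 'a poly" where
  "Qpoly g lam = (\<Prod>i=1..2*g+1. [:- lam i, 1:])"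

definition Lam :: "nat \<Rightarrow> (nat \<Rightarrow> 'a) \<Rightarrow> 'a option set" where
  "Lam g lam = Some ` lam ` {1..2*g+1} \<union> {None}"

text \<open>Laurent expansion of the coordinate t at a point.\<close>
definition t_at :: "'a::field option \<Rightarrow> 'a fls" where
  "t_at mu = (case mu of Some a \<Rightarrow> fls_X + fls_const a | None \<Rightarrow> fls_X_inv)"

text \<open>Laurent expansion at mu of the local parameter s_lambda.\<close>
definition s_at :: "'a::field option \<Rightarrow> 'a option \<Rightarrow> 'a fls" where
  "s_at lam mu = (case lam of Some a \<Rightarrow> t_at mu - fls_const a | None \<Rightarrow> inverse (t_at mu))"

text \<open>Laurent expansion phi_mu of a rational function P/R (poles in Lambda).\<close>
definition phi :: "'a::field option \<Rightarrow> 'a poly \<times> 'a poly \<Rightarrow> 'a fls" where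
  "phi mu f = poly (map_poly fls_const (fst f)) (t_at mu) / poly (map_poly fls_const (snd f)) (t_at mu)"

text \<open>Expansion at mu of the principal part Pr_lambda(F) of a Laurent series F in s_lambda.\<close>
definition Pr_at :: "'a::field option \<Rightarrow> 'a fls \<Rightarrow> 'a option \<Rightarrow> 'a fls" where
  "Pr_at lam F mu =
     (\<Sum>l\<in>{fls_subdegree F .. (if lam = None then 0 else -1)}. fls_const (fls_nth F l) * power_int (s_at lam mu) l)"

definition in_Bc :: "('a::field \<Rightarrow> real) \<Rightarrow> 'a option set \<Rightarrow> ('a option \<Rightarrow> 'a fps) \<Rightarrow> bool" where
  "in_Bc absv L G \<longleftrightarrow>
     (\<forall>mu\<in>L. \<forall>\<eta>::real. 0 < \<eta> \<and> \<eta> < 1 \<longrightarrow> (\<lambda>l. absv (G mu $ l) * \<eta> ^ l) \<longlonglongrightarrow> 0) \<and>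
     (None \<in> L \<longrightarrow> G None $ 0 = 0)"

text \<open>The B_K^dagger-module action on B_c (for rational f), as a Laurent series at mu.\<close>
definition act :: "'a::field option set \<Rightarrow> 'a poly \<times> 'a poly \<Rightarrow> ('a option \<Rightarrow> 'a fps) \<Rightarrow> 'a option \<Rightarrow> 'a fls" where
  "act L f G mu = phi mu f * fps_to_fls (G mu)
     - (\<Sum>lam\<in>L. Pr_at lam (phi lam f * fps_to_fls (G lam)) mu)"

text \<open>Componentwise d/dt: d/ds at finite points, -s^2 d/ds at infinity.\<close>
definition dt :: "('a::field option \<Rightarrow> 'a fps) \<Rightarrow> 'a option \<Rightarrow> 'a fls" where
  "dt G mu = (case mu of Some _ \<Rightarrow> fps_to_fls (fps_deriv (G mu))
                       | None \<Rightarrow> - (fls_X ^ 2) * fps_to_fls (fps_deriv (G mu)))"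

definition h_rat :: "nat \<Rightarrow> (nat \<Rightarrow> 'a::field) \<Rightarrow> 'a poly \<times> 'a poly" where
  "h_rat g lam = (pderiv (Qpoly g lam), smult 2 (Qpoly g lam))"

text \<open>m_c = 1 (x) G0 + Y (x) G1 lies in H = ker nabla_c.\<close>
definition in_H :: "('a::field_char_0 \<Rightarrow> real) \<Rightarrow> nat \<Rightarrow> (nat \<Rightarrow> 'a) \<Rightarrow> ('a option \<Rightarrow> 'a fps) \<Rightarrow> ('a option \<Rightarrow> 'a fps) \<Rightarrow> bool" where
  "in_H absv g lam G0 G1 \<longleftrightarrow>
     in_Bc absv (Lam g lam) G0 \<and> in_Bc absv (Lam g lam) G1 \<and>
     (\<forall>mu\<in>Lam g lam. dt G0 mu = 0 \<and> dt G1 mu + act (Lam g lam) (h_rat g lam) G1 mu = 0)"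

end

theory Submission
  imports Defs
begin

(* Write m_c = Y (x) G with G = (G_mu)_mu, and let c_i = G_(lambda_i)(0).
   Since h = Q'/(2Q) = (1/2) sum_i 1/(t - lambda_i) has a simple pole with residue 1/2 at
   each lambda_i and vanishes at infinity, the principal parts of h G are the simple poles
   (c_i/2)/(t - lambda_i), so nabla_c(m_c) = 0 says that at every mu in Lambda
       dG_mu/dt + h G_mu = sum_i (c_i/2)/(t - lambda_i).
   At infinity, where 1/(t - lambda_i) = sum_n lambda_i^n s^(n+1), the vanishing of the first
   2g+2 coefficients of G_infinity forces sum_i c_i lambda_i^n = 0 for n <= 2g; as the
   lambda_i are distinct (their differences are units), a Vandermonde argument gives c_i = 0.
   The remaining homogeneous equations have only the zero power series solution: at
   infinity because (2g+1)/2 is not an integer, at lambda_j because 1/2 + n is never 0. *)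

(* Maps between coefficient rings that respect sums, products and 1 commute with the
   polynomial operations used to expand h = Q'/(2Q); we apply this to fls_const. *)
locale coefficient_hom =
  fixes f :: "'a::idom \<Rightarrow> 'b::idom"
  assumes hom_add: "f (x + y) = f x + f y"
    and hom_mult: "f (x * y) = f x * f y"
    and hom_one: "f 1 = 1"
begin

lemma hom_zero: "f 0 = 0"
  by (metis add.right_neutral add_left_cancel hom_add)

lemma hom_sum: "f (\<Sum>i\<in>A. g i) = (\<Sum>i\<in>A. f (g i))"
  by (induction A rule: infinite_finite_induct) (simp_all add: hom_zero hom_add)

lemma hom_of_nat_mult: "f (of_nat k * x) = of_nat k * f x"
  by (induction k) (simp_all add: hom_zero hom_add algebra_simps)

lemma map_poly_mult: "map_poly f (p * q) = map_poly f p * map_poly f q"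
  by (intro poly_eqI) (simp add: coeff_mult coeff_map_poly hom_zero hom_sum hom_mult)

lemma map_poly_prod: "map_poly f (\<Prod>i\<in>A. p i) = (\<Prod>i\<in>A. map_poly f (p i))"
  by (induction A rule: infinite_finite_induct) (simp_all add: map_poly_mult hom_one)

lemma map_poly_pderiv: "map_poly f (pderiv p) = pderiv (map_poly f p)"
  by (intro poly_eqI) (simp add: coeff_pderiv coeff_map_poly hom_zero hom_of_nat_mult del: of_nat_Suc)

end

interpretation fls_const: coefficient_hom "fls_const :: 'a::field \<Rightarrow> 'a fls"
  by unfold_locales (simp_all add: fls_plus_const)

lemma fls_const_half: "fls_const (1/2) = (1/2 :: 'a::field fls)"
  by (metis fls_const_1 fls_const_divide_const fls_const_numeral)

lemma fls_X_inv_X: "fls_X_inv * fls_X = (1::'a::field fls)"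
  and fls_X_X_inv: "fls_X * fls_X_inv = (1::'a::field fls)"
  by (simp_all add: fls_X_inv_times_conv_shift)

lemma fps_to_fls_sum: "fps_to_fls (\<Sum>i\<in>A. f i) = (\<Sum>i\<in>A. fps_to_fls (f i :: 'a::field fps))"
  by (induction A rule: infinite_finite_induct) auto

definition geom :: "'a::field \<Rightarrow> 'a fps" where
  "geom c = Abs_fps (\<lambda>m. c ^ m)"

lemma geom_inverse: "(1 - fps_const c * fps_X) * geom c = 1"
proof (rule fps_ext)
  fix n show "((1 - fps_const c * fps_X) * geom c) $ n = (1::'a fps) $ n"
    by (cases n) (simp_all add: geom_def algebra_simps mult.assoc)
qed

lemma inverse_at_infinity:
  "inverse (fls_X_inv - fls_const (c::'a::field)) = fps_to_fls (fps_X * geom c)"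
proof (rule inverse_unique)
  have "(fls_X_inv - fls_const c) * fps_to_fls (fps_X * geom c)
      = (fls_X_inv * fls_X) * fps_to_fls (geom c) - fls_const c * fls_X * fps_to_fls (geom c)"
    by (simp add: fls_times_fps_to_fls algebra_simps)
  also have "\<dots> = fps_to_fls ((1 - fps_const c * fps_X) * geom c)"
    by (simp add: fls_X_inv_X fls_X_X_inv fls_times_fps_to_fls algebra_simps)
  finally show "(fls_X_inv - fls_const c) * fps_to_fls (fps_X * geom c) = 1"
    by (simp add: geom_inverse)
qed

lemma inverse_at_finite:
  assumes "d \<noteq> 0"
  shows "inverse (fls_X + fls_const (d::'a::field)) = fps_to_fls (inverse (fps_X + fps_const d))"
proof -
  have "subdegree (fps_X + fps_const d) = 0" using assms by (intro subdegree_eq_0) simp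
  then show ?thesis by (simp flip: fls_inverse_fps_to_fls)
qed

lemma t_at_not_const: "t_at mu \<noteq> fls_const (c::'a::field)"
proof
  assume eq: "t_at mu = fls_const c"
  show False
  proof (cases mu)
    case None
    then have "fls_nth (t_at mu) (-1) = fls_nth (fls_const c) (-1)" using eq by simp
    then show False using None by (simp add: t_at_def)
  next
    case (Some a)
    then have "fls_nth (t_at mu) 1 = fls_nth (fls_const c) 1" using eq by simp
    then show False using Some by (simp add: t_at_def)
  qed
qed

lemma t_at_minus_const: "t_at (Some a) - fls_const b = fls_X + fls_const (a - b)"
  by (intro fls_eqI) (simp add: t_at_def)

lemma log_deriv_prod_linear:
  fixes T :: "'a::field"
  assumes "finite A" "\<forall>i\<in>A. T \<noteq> a i"
  shows "poly (pderiv (\<Prod>i\<in>A. [:- a i, 1:])) T / poly (\<Prod>i\<in>A. [:- a i, 1:]) T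
         = (\<Sum>i\<in>A. inverse (T - a i))"
proof -
  have nonzero: "(\<Prod>k\<in>B. T - a k) \<noteq> 0" if "B \<subseteq> A" for B
    using assms that by (subst prod_zero_iff) (auto intro: finite_subset)
  have "poly (pderiv (\<Prod>i\<in>A. [:- a i, 1:])) T = (\<Sum>i\<in>A. \<Prod>k\<in>A-{i}. T - a k)"
    by (simp add: pderiv_prod poly_sum poly_prod pderiv_pCons)
  moreover have "poly (\<Prod>i\<in>A. [:- a i, 1:]) T = (\<Prod>k\<in>A. T - a k)"
    by (simp add: poly_prod)
  moreover have "(\<Prod>k\<in>A-{i}. T - a k) / (\<Prod>k\<in>A. T - a k) = inverse (T - a i)" if "i \<in> A" for i
  proof -
    have "(\<Prod>k\<in>A. T - a k) = (T - a i) * (\<Prod>k\<in>A-{i}. T - a k)"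
      using that assms(1) by (simp add: prod.remove)
    then show ?thesis using nonzero[of "A-{i}"] assms that by (simp add: field_simps)
  qed
  ultimately show ?thesis by (simp add: sum_divide_distrib)
qed

lemma moments_annihilate_poly:
  fixes a c :: "nat \<Rightarrow> 'a::field"
  assumes "\<forall>n<N. (\<Sum>i\<in>I. c i * a i ^ n) = 0" and "degree p < N"
  shows "(\<Sum>i\<in>I. c i * poly p (a i)) = 0"
proof -
  have "(\<Sum>i\<in>I. c i * poly p (a i)) = (\<Sum>i\<in>I. \<Sum>n\<le>degree p. c i * (coeff p n * a i ^ n))"
    by (simp add: poly_altdef sum_distrib_left)
  also have "\<dots> = (\<Sum>n\<le>degree p. coeff p n * (\<Sum>i\<in>I. c i * a i ^ n))"
    by (subst sum.swap) (simp add: sum_distrib_left algebra_simps)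
  also have "\<dots> = 0" using assms by (intro sum.neutral) auto
  finally show ?thesis .
qed

(* Invertibility of the Vandermonde matrix: vanishing of the first card I weighted power
   sums of distinct nodes forces all weights to vanish (test against prod_{k<>j} (X - a_k)). *)
lemma vandermonde_kernel:
  fixes a c :: "nat \<Rightarrow> 'a::field"
  assumes fin: "finite I" and inj: "inj_on a I"
    and moments: "\<forall>n<card I. (\<Sum>i\<in>I. c i * a i ^ n) = 0"
    and j: "j \<in> I"
  shows "c j = 0"
proof -
  define p where "p = (\<Prod>k\<in>I-{j}. [:- a k, 1:])"
  have poly_p: "poly p x = (\<Prod>k\<in>I-{j}. x - a k)" for x
    by (simp add: p_def poly_prod)
  have "degree p \<le> card (I - {j})"
    using degree_prod_sum_le[of "I-{j}" "\<lambda>k. [:- a k, 1:]"] fin by (simp add: p_def o_def)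
  also have "\<dots> < card I" using fin j by (meson card_Diff1_less)
  finally have "(\<Sum>i\<in>I. c i * poly p (a i)) = 0"
    using moments by (intro moments_annihilate_poly) auto
  moreover have "(\<Sum>i\<in>I. c i * poly p (a i)) = c j * poly p (a j)"
  proof -
    have "poly p (a i) = 0" if "i \<in> I - {j}" for i
      unfolding poly_p using that fin by (intro prod_zero) auto
    then show ?thesis using fin j by (simp add: sum.remove)
  qed
  moreover have "poly p (a j) \<noteq> 0"
    unfolding poly_p using fin inj j by (subst prod_zero_iff) (auto simp: inj_on_def)
  ultimately show ?thesis by simp
qed

(* Uniqueness at an irregular singular point: if s^2 G' = H G with H(0) = 0 and H'(0) not
   a natural number, then comparing coefficients of s^(n+1) gives (H'(0) - n) G_n = 0. *)
lemma fps_irregular_singular_unique: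
  fixes G H :: "'a::field fps"
  assumes ode: "fps_X ^ 2 * fps_deriv G = H * G"
    and H0: "H $ 0 = 0" and H1: "\<forall>n. H $ 1 \<noteq> of_nat n"
  shows "G = 0"
proof (rule fps_ext)
  fix n show "G $ n = (0::'a fps) $ n"
  proof (induction n rule: less_induct)
    case (less n)
    have "(H * G) $ Suc n = (\<Sum>i=0..Suc n. if i = 1 then H $ 1 * G $ n else 0)"
      unfolding fps_mult_nth
    proof (intro sum.cong refl)
      fix i assume i: "i \<in> {0..Suc n}"
      show "H $ i * G $ (Suc n - i) = (if i = 1 then H $ 1 * G $ n else 0)"
        using H0 less.IH[of "Suc n - i"] i by (cases "i = 0"; cases "i = 1") auto
    qed
    also have "\<dots> = H $ 1 * G $ n" by (simp add: sum.delta)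
    finally have rhs: "(H * G) $ Suc n = H $ 1 * G $ n" .
    have lhs: "(fps_X ^ 2 * fps_deriv G) $ Suc n = of_nat n * G $ n"
      by (cases n) (simp_all add: fps_X_power_mult_nth)
    from lhs rhs ode have "(H $ 1 - of_nat n) * G $ n = 0" by (simp add: algebra_simps)
    then show ?case using H1 by simp
  qed
qed

(* Uniqueness at a regular singular point: the equation G' + (k/s + V) G = 0 with
   -k not a natural number has no nonzero power series solution, since multiplying by s
   gives (k + n) G_n = (terms in G_0, ..., G_(n-1)). *)
lemma fls_regular_singular_unique:
  fixes G V :: "'a::field fps"
  assumes ode: "fps_to_fls (fps_deriv G) + (fls_const k * fls_X_inv + fps_to_fls V) * fps_to_fls G = 0"
    and k: "\<forall>n. k + of_nat n \<noteq> 0"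
  shows "G = 0"
proof -
  have "fps_to_fls (fps_X * fps_deriv G + fps_const k * G + fps_X * (V * G))
      = fls_X * (fps_to_fls (fps_deriv G) + (fls_const k * fls_X_inv + fps_to_fls V) * fps_to_fls G)"
    by (simp add: algebra_simps fls_times_fps_to_fls fls_X_X_inv
        mult.assoc[of fls_X "fls_const k", symmetric] mult.commute[of fls_X "fls_const k"])
  then have ode': "fps_X * fps_deriv G + fps_const k * G + fps_X * (V * G) = 0"
    using ode by (simp only: fps_to_fls_eq_0_iff mult_zero_right)
  show ?thesis
  proof (rule fps_ext)
    fix n show "G $ n = (0::'a fps) $ n"
    proof (induction n rule: less_induct)
      case (less n)
      have "(fps_X * (V * G)) $ n = 0"
        using less.IH by (cases n) (auto simp: fps_mult_nth intro!: sum.neutral)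
      then have "(k + of_nat n) * G $ n = 0"
        using arg_cong[OF ode', of "\<lambda>F. F $ n"] by (cases n) (simp_all add: algebra_simps)
      then show ?case using k by simp
    qed
  qed
qed

lemma phi_h_partial_fractions:
  fixes lam :: "nat \<Rightarrow> 'a::field_char_0"
  assumes "\<forall>i\<in>{1..2*g+1}. t_at mu \<noteq> fls_const (lam i)"
  shows "phi mu (h_rat g lam) =
     (\<Sum>i\<in>{1..2*g+1}. fls_const (1/2) * inverse (t_at mu - fls_const (lam i)))"
proof -
  let ?A = "{1..2*g+1}" and ?T = "t_at mu"
  let ?Q = "\<Prod>i\<in>?A. [:- fls_const (lam i), 1:]"
  have linear: "map_poly fls_const [:- c, 1:] = [:- fls_const c, 1:]" for c :: 'a
    by (simp add: map_poly_pCons)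
  have "map_poly fls_const (smult 2 (Qpoly g lam)) = smult 2 (map_poly fls_const (Qpoly g lam))"
    using map_poly_smult[OF fls_const.hom_zero fls_const.hom_mult, of 2] by simp
  then have "phi mu (h_rat g lam) = poly (pderiv ?Q) ?T / (2 * poly ?Q ?T)"
    unfolding phi_def h_rat_def Qpoly_def
    by (simp only: fst_conv snd_conv fls_const.map_poly_pderiv fls_const.map_poly_prod linear poly_smult)
  also have "\<dots> = fls_const (1/2) * (poly (pderiv ?Q) ?T / poly ?Q ?T)"
    by (simp add: fls_const_half)
  also have "\<dots> = fls_const (1/2) * (\<Sum>i\<in>?A. inverse (?T - fls_const (lam i)))"
    using assms by (subst log_deriv_prod_linear) auto
  finally show ?thesis by (simp only: sum_distrib_left)
qed

(* The expansion of h at infinity: (1/2) sum_i s/(1 - lambda_i s). *)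
definition h_inf :: "nat \<Rightarrow> (nat \<Rightarrow> 'a::field_char_0) \<Rightarrow> 'a fps" where
  "h_inf g lam = (\<Sum>i\<in>{1..2*g+1}. fps_const (1/2) * (fps_X * geom (lam i)))"

(* The regular part of the expansion of h at lambda_j: (1/2) sum_(i<>j) 1/(s + lambda_j - lambda_i). *)
definition h_reg :: "nat \<Rightarrow> (nat \<Rightarrow> 'a::field_char_0) \<Rightarrow> nat \<Rightarrow> 'a fps" where
  "h_reg g lam j = (\<Sum>i\<in>{1..2*g+1}-{j}. fps_const (1/2) * inverse (fps_X + fps_const (lam j - lam i)))"

lemma h_inf_nth_0: "h_inf g lam $ 0 = 0"
  by (simp add: h_inf_def fps_sum_nth)

lemma h_inf_nth_Suc: "h_inf g lam $ Suc m = (\<Sum>i\<in>{1..2*g+1}. (1/2) * lam i ^ m)"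
  by (simp add: h_inf_def fps_sum_nth geom_def)

(* The residue 1/2 of h at a finite branch point is not a non-positive integer. *)
lemma half_plus_nat_nonzero: "1/2 + of_nat n \<noteq> (0::'a::field_char_0)"
proof -
  have "(of_nat (2 * n + 1) :: 'a) \<noteq> of_nat 0" by (simp only: of_nat_eq_iff)
  then show ?thesis by (auto simp: field_simps)
qed

lemma h_inf_nth_1_not_nat: "h_inf g (lam :: nat \<Rightarrow> 'a::field_char_0) $ 1 \<noteq> of_nat n"
proof
  assume "h_inf g lam $ 1 = of_nat n"
  then have "(of_nat (2*g+1) :: 'a) = of_nat (2*n)"
    using h_inf_nth_Suc[of g lam 0] by (simp add: field_simps)
  then have "2*g+1 = 2*n" by (simp only: of_nat_eq_iff)
  then show False by presburger
qed

lemma phi_h_at_infinity: "phi None (h_rat g lam) = fps_to_fls (h_inf g lam)"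
proof -
  have "phi None (h_rat g lam) = (\<Sum>i\<in>{1..2*g+1}. fls_const (1/2) * inverse (t_at None - fls_const (lam i)))"
    by (simp add: phi_h_partial_fractions t_at_not_const)
  also have "\<dots> = (\<Sum>i\<in>{1..2*g+1}. fls_const (1/2) * fps_to_fls (fps_X * geom (lam i)))"
    by (simp add: t_at_def inverse_at_infinity)
  also have "\<dots> = fps_to_fls (h_inf g lam)"
    unfolding h_inf_def fps_to_fls_sum by (simp add: fls_times_fps_to_fls)
  finally show ?thesis .
qed

lemma phi_h_at_branch_point:
  assumes inj: "inj_on lam {1..2*g+1}" and j: "j \<in> {1..2*g+1}"
  shows "phi (Some (lam j)) (h_rat g lam) = fls_const (1/2) * fls_X_inv + fps_to_fls (h_reg g lam j)"
proof -
  let ?f = "\<lambda>i. fls_const (1/2::'a) * inverse (t_at (Some (lam j)) - fls_const (lam i))"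
  have "phi (Some (lam j)) (h_rat g lam) = (\<Sum>i\<in>{1..2*g+1}. ?f i)"
    by (simp add: phi_h_partial_fractions t_at_not_const)
  also have "\<dots> = ?f j + (\<Sum>i\<in>{1..2*g+1}-{j}. ?f i)"
    using j by (simp add: sum.remove del: One_nat_def)
  also have "?f j = fls_const (1/2) * fls_X_inv"
    by (simp add: t_at_minus_const fls_inverse_X)
  also have "(\<Sum>i\<in>{1..2*g+1}-{j}. ?f i) = fps_to_fls (h_reg g lam j)"
    unfolding h_reg_def fps_to_fls_sum
  proof (intro sum.cong refl)
    fix i assume i: "i \<in> {1..2*g+1}-{j}"
    then have "lam j - lam i \<noteq> 0" using inj j by (auto simp: inj_on_def)
    then show "?f i = fps_to_fls (fps_const (1/2) * inverse (fps_X + fps_const (lam j - lam i)))"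
      by (simp add: t_at_minus_const inverse_at_finite fls_times_fps_to_fls)
  qed
  finally show ?thesis .
qed

lemma Pr_at_infinity_vanishes:
  assumes "\<forall>l\<le>0. fls_nth F l = 0"
  shows "Pr_at None F mu = 0"
  unfolding Pr_at_def using assms by (intro sum.neutral) auto

lemma Pr_at_simple_pole:
  fixes F :: "'a::field fls"
  assumes "\<forall>l< -1. fls_nth F l = 0"
  shows "Pr_at (Some a) F mu = fls_const (fls_nth F (-1)) * inverse (s_at (Some a) mu)"
proof -
  let ?S = "{fls_subdegree F .. -1}" and ?r = "fls_const (fls_nth F (-1)) * inverse (s_at (Some a) mu)"
  have "Pr_at (Some a) F mu = (\<Sum>l\<in>?S. if l = -1 then ?r else 0)"
    unfolding Pr_at_def using assms by (intro sum.cong) auto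
  also have "\<dots> = (if -1 \<in> ?S then ?r else 0)"
    by (simp add: sum.delta)
  also have "\<dots> = ?r"
  proof (cases "-1 \<in> ?S")
    case False
    then have "fls_nth F (-1) = 0" by (simp add: fls_eq0_below_subdegree)
    then show ?thesis using False by simp
  qed simp
  finally show ?thesis .
qed

lemma sum_over_Lam:
  assumes "inj_on lam {1..2*g+1}"
  shows "(\<Sum>x\<in>Lam g lam. f x) = (\<Sum>i\<in>{1..2*g+1}. f (Some (lam i))) + f None"
proof -
  have "(\<Sum>x\<in>Lam g lam. f x) = (\<Sum>x\<in>(Some \<circ> lam) ` {1..2*g+1}. f x) + f None"
    unfolding Lam_def by (subst sum.union_disjoint) (auto simp: image_comp)
  also have "(\<Sum>x\<in>(Some \<circ> lam) ` {1..2*g+1}. f x) = (\<Sum>i\<in>{1..2*g+1}. f (Some (lam i)))"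
    using assms by (subst sum.reindex) (auto simp: inj_on_def)
  finally show ?thesis .
qed

lemma fls_nth_simple_pole_times:
  fixes G V :: "'a::field fps"
  shows "fls_nth ((fls_const k * fls_X_inv + fps_to_fls V) * fps_to_fls G) n
      = k * fls_nth (fps_to_fls G) (n+1) + fls_nth (fps_to_fls (V*G)) n"
proof -
  have "(fls_const k * fls_X_inv + fps_to_fls V) * fps_to_fls G
      = fls_const k * (fls_X_inv * fps_to_fls G) + fps_to_fls (V*G)"
    by (simp add: algebra_simps fls_times_fps_to_fls)
  then show ?thesis by (simp add: fls_X_inv_times_conv_shift)
qed

lemma act_h_closed_form:
  fixes lam :: "nat \<Rightarrow> 'a::field_char_0"
  assumes inj: "inj_on lam {1..2*g+1}"
  shows "act (Lam g lam) (h_rat g lam) G mu = phi mu (h_rat g lam) * fps_to_fls (G mu)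
     - (\<Sum>i\<in>{1..2*g+1}. fls_const (G (Some (lam i)) $ 0 / 2) * inverse (t_at mu - fls_const (lam i)))"
proof -
  have at_infinity: "Pr_at None (phi None (h_rat g lam) * fps_to_fls (G None)) mu = 0"
  proof (rule Pr_at_infinity_vanishes, intro allI impI)
    fix l :: int assume "l \<le> 0"
    then show "fls_nth (phi None (h_rat g lam) * fps_to_fls (G None)) l = 0"
      unfolding phi_h_at_infinity fls_times_fps_to_fls[symmetric]
      by (cases "l = 0") (auto simp: fps_mult_nth h_inf_nth_0)
  qed
  have at_branch_point:
    "Pr_at (Some (lam i)) (phi (Some (lam i)) (h_rat g lam) * fps_to_fls (G (Some (lam i)))) mu
     = fls_const (G (Some (lam i)) $ 0 / 2) * inverse (t_at mu - fls_const (lam i))"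
    if i: "i \<in> {1..2*g+1}" for i
  proof -
    let ?F = "phi (Some (lam i)) (h_rat g lam) * fps_to_fls (G (Some (lam i)))"
    have nth: "fls_nth ?F l = (1/2) * fls_nth (fps_to_fls (G (Some (lam i)))) (l+1)
         + fls_nth (fps_to_fls (h_reg g lam i * G (Some (lam i)))) l" for l
      by (simp only: phi_h_at_branch_point[OF inj i] fls_nth_simple_pole_times)
    have "\<forall>l< -1. fls_nth ?F l = 0" by (simp add: nth)
    then have "Pr_at (Some (lam i)) ?F mu = fls_const (fls_nth ?F (-1)) * inverse (s_at (Some (lam i)) mu)"
      by (rule Pr_at_simple_pole)
    also have "fls_nth ?F (-1) = G (Some (lam i)) $ 0 / 2" by (simp add: nth)
    finally show ?thesis by (simp add: s_at_def)
  qed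
  show ?thesis
    unfolding act_def by (simp only: sum_over_Lam[OF inj] at_infinity at_branch_point cong: sum.cong) simp
qed

lemma local_equation:
  fixes lam :: "nat \<Rightarrow> 'a::field_char_0"
  assumes inj: "inj_on lam {1..2*g+1}" and H: "in_H absv g lam G0 G1" and mu: "mu \<in> Lam g lam"
  shows "dt G1 mu + phi mu (h_rat g lam) * fps_to_fls (G1 mu)
     = (\<Sum>i\<in>{1..2*g+1}. fls_const (G1 (Some (lam i)) $ 0 / 2) * inverse (t_at mu - fls_const (lam i)))"
  using H mu unfolding in_H_def act_h_closed_form[OF inj] by (simp add: algebra_simps)

lemma equation_at_infinity:
  fixes lam :: "nat \<Rightarrow> 'a::field_char_0"
  assumes "dt G None + phi None (h_rat g lam) * fps_to_fls (G None)
     = (\<Sum>i\<in>{1..2*g+1}. fls_const (c i / 2) * inverse (t_at None - fls_const (lam i)))"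
  shows "fps_X ^ 2 * fps_deriv (G None)
     = h_inf g lam * G None - (\<Sum>i\<in>{1..2*g+1}. fps_const (c i / 2) * (fps_X * geom (lam i)))"
proof -
  have "fps_to_fls (fps_X ^ 2 * fps_deriv (G None)) = - dt G None"
    by (simp add: dt_def fls_times_fps_to_fls fps_to_fls_power)
  also have "\<dots> = phi None (h_rat g lam) * fps_to_fls (G None)
      - (\<Sum>i\<in>{1..2*g+1}. fls_const (c i / 2) * inverse (t_at None - fls_const (lam i)))"
    using assms by (simp add: algebra_simps)
  also have "\<dots> = fps_to_fls (h_inf g lam * G None
      - (\<Sum>i\<in>{1..2*g+1}. fps_const (c i / 2) * (fps_X * geom (lam i))))"
    by (simp add: phi_h_at_infinity t_at_def inverse_at_infinity fps_to_fls_sum fls_times_fps_to_fls)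
  finally show ?thesis by (simp only: fps_to_fls_eq_iff)
qed

lemma moments_from_low_order_solution:
  fixes G H :: "'a::field_char_0 fps"
  assumes ode: "fps_X ^ 2 * fps_deriv G = H * G - (\<Sum>i\<in>I. fps_const (c i / 2) * (fps_X * geom (a i)))"
    and low: "\<forall>k\<le>N. G $ k = 0" and n: "n < N"
  shows "(\<Sum>i\<in>I. c i * a i ^ n) = 0"
proof -
  have "(fps_X ^ 2 * fps_deriv G) $ Suc n = 0"
    using low n by (simp add: fps_X_power_mult_nth)
  moreover have "(H * G) $ Suc n = 0"
    using low n by (simp add: fps_mult_nth)
  moreover have "(\<Sum>i\<in>I. fps_const (c i / 2) * (fps_X * geom (a i))) $ Suc n = (\<Sum>i\<in>I. c i * a i ^ n) / 2"
    by (simp add: fps_sum_nth geom_def sum_divide_distrib)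
  ultimately show ?thesis
    using arg_cong[OF ode, of "\<lambda>F. F $ Suc n"] by simp
qed

lemma unit_differences_inj:
  assumes "padic_abs absv"
    and "\<forall>i\<in>I. \<forall>j\<in>I. i \<noteq> j \<longrightarrow> absv (lam i - lam j) = 1"
  shows "inj_on lam I"
proof (rule inj_onI)
  fix i j assume "i \<in> I" "j \<in> I" "lam i = lam j"
  moreover have "absv 0 = 0" using assms(1) unfolding padic_abs_def by blast
  ultimately show "i = j" using assms(2) by force
qed

theorem mainTheorem8:
  fixes absv :: "'a::field_char_0 \<Rightarrow> real"
    and g :: nat and lam :: "nat \<Rightarrow> 'a"
    and G0 G1 :: "'a option \<Rightarrow> 'a fps"
  assumes "padic_abs absv"
    and "g \<ge> 1"
    and "\<forall>i\<in>{1..2*g+1}. absv (lam i) \<le> 1"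
    and "\<forall>i\<in>{1..2*g+1}. \<forall>j\<in>{1..2*g+1}. i \<noteq> j \<longrightarrow> absv (lam i - lam j) = 1"
    and "in_H absv g lam G0 G1"
    and "\<forall>mu\<in>Lam g lam. G0 mu = 0"
    and "\<forall>l\<le>2*g+1. G1 None $ l = 0"
  shows "\<forall>mu\<in>Lam g lam. G0 mu = 0 \<and> G1 mu = 0"
proof -
  let ?I = "{1..2*g+1}"
  define c where "c i = G1 (Some (lam i)) $ 0" for i
  have inj: "inj_on lam ?I"
    using assms(1,4) by (rule unit_differences_inj)
  note local = local_equation[OF inj assms(5), folded c_def]
  have at_infinity: "fps_X ^ 2 * fps_deriv (G1 None)
      = h_inf g lam * G1 None - (\<Sum>i\<in>?I. fps_const (c i / 2) * (fps_X * geom (lam i)))"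
    by (rule equation_at_infinity) (rule local, simp add: Lam_def)
  have residues: "c i = 0" if "i \<in> ?I" for i
    using moments_from_low_order_solution[OF at_infinity assms(7)]
    by (intro vandermonde_kernel[OF _ inj _ that]) auto
  have "G1 None = 0"
  proof (rule fps_irregular_singular_unique)
    show "fps_X ^ 2 * fps_deriv (G1 None) = h_inf g lam * G1 None"
      using at_infinity residues by simp
  qed (use h_inf_nth_0 h_inf_nth_1_not_nat in blast)+
  moreover have "G1 (Some (lam j)) = 0" if j: "j \<in> ?I" for j
  proof (rule fls_regular_singular_unique)
    show "\<forall>n. 1/2 + of_nat n \<noteq> (0::'a)"
      using half_plus_nat_nonzero by blast
    show "fps_to_fls (fps_deriv (G1 (Some (lam j)))) + (fls_const (1/2) * fls_X_inv
        + fps_to_fls (h_reg g lam j)) * fps_to_fls (G1 (Some (lam j))) = 0"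
      using local[of "Some (lam j)"] j residues
      by (simp add: Lam_def dt_def phi_h_at_branch_point[OF inj j])
  qed
  ultimately show ?thesis
    using assms(6) unfolding Lam_def by auto
qed

end
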